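(* For every positive integer $m$, \[ {}_{H}w_{m}(x)=(1+x-m)\,w_{m-1}(x)+(1+x)\sum_{k=1}^{m-1}\binom{m}{k}w_{k-1}(x)\,w_{m-k}(x). \]
   Context: $\genfrac{\{}{\}}{0pt}{}{n}{k}$ denotes the Stirling numbers of the second kind. The geometric polynomials are $w_n(x)=\sum_{k=0}^{n}\genfrac{\{}{\}}{0pt}{}{n}{k}k!\,x^k$ (so $w_0(x)=1$). With $H_k=\sum_{i=1}^k 1/i$, the harmonic geometric polynomials are ${}_{H}w_n(x)=\sum_{k=1}^{n}\genfrac{\{}{\}}{0pt}{}{n}{k}k!\,H_k\,x^k$. *)

theory Defs
  imports "HOL-Analysis.Analysis" "HOL-Combinatorics.Stirling"
begin

definition geom_poly :: "nat \<Rightarrow> real \<Rightarrow> real" where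
  "geom_poly n x = (\<Sum>k=0..n. real (Stirling n k) * fact k * x ^ k)"

definition harm_geom_poly :: "nat \<Rightarrow> real \<Rightarrow> real" where
  "harm_geom_poly n x = (\<Sum>k=1..n. real (Stirling n k) * fact k * harm k * x ^ k)"

end

theory Submission
  imports Defs "HOL-Computational_Algebra.Formal_Power_Series"
begin

text \<open>
  Put \<open>u = x (e\<^sup>t - 1)\<close>. Since \<open>(e\<^sup>t - 1)\<^sup>k / k!\<close> is the exponential generating
  function of \<open>S(n, k)\<close>, the exponential generating functions of \<open>w\<^sub>n(x)\<close> and
  \<open>\<^sub>Hw\<^sub>n(x)\<close> are \<open>W = 1/(1 - u)\<close> and \<open>H = -ln(1 - u)/(1 - u)\<close>, obtained by
  substituting \<open>u\<close> into \<open>\<Sum> t\<^sup>n\<close> and \<open>\<Sum> H\<^sub>n t\<^sup>n\<close>. As \<open>u' = x + u\<close>, the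
  derivative of \<open>-ln(1 - u)\<close> is \<open>u' W = (1 + x) W - 1\<close>, so
  \<open>H = ((1 + x) \<integral>W - t) W\<close>; comparing coefficients of \<open>t\<^sup>m/m!\<close> gives the identity.
\<close>

unbundle no vec_syntax
notation fps_nth (infixl \<open>$\<close> 75)

lemma fps_deriv_exp_minus_one_power:
  "fps_deriv ((fps_exp 1 - 1) ^ Suc k :: 'a :: field_char_0 fps) =
     of_nat (Suc k) * ((fps_exp 1 - 1) ^ Suc k + (fps_exp 1 - 1) ^ k)"
proof -
  define D :: "'a fps" where "D = fps_exp 1 - 1"
  have "fps_deriv D = D + 1"
    by (simp add: D_def)
  then have "fps_deriv (D ^ Suc k) = of_nat (Suc k) * (D + 1) * D ^ k"
    using fps_deriv_power'[of D "Suc k"] by (simp del: power_Suc)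
  also have "\<dots> = of_nat (Suc k) * (D ^ Suc k + D ^ k)"
    by (simp add: algebra_simps)
  finally have "fps_deriv (D ^ Suc k) = of_nat (Suc k) * (D ^ Suc k + D ^ k)" .
  then show ?thesis
    by (simp only: D_def)
qed

lemma fps_exp_minus_one_power_nth:
  "((fps_exp 1 - 1) ^ k :: 'a :: field_char_0 fps) $ n = fact k * of_nat (Stirling n k) / fact n"
proof (induction n arbitrary: k)
  case 0
  then show ?case by (cases k) (simp_all add: fps_nth_power_0)
next
  case (Suc n)
  note IH = Suc.IH
  show ?case
  proof (cases k)
    case 0
    then show ?thesis by simp
  next
    case (Suc j)
    have "of_nat (Suc n) * ((fps_exp 1 - 1) ^ Suc j :: 'a fps) $ Suc n
        = fps_deriv ((fps_exp 1 - 1) ^ Suc j) $ n"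
      by (simp del: power_Suc)
    also have "\<dots> = of_nat (Suc j) * (((fps_exp 1 - 1) ^ Suc j) $ n + ((fps_exp 1 - 1) ^ j) $ n)"
      by (simp only: fps_deriv_exp_minus_one_power fps_mult_left_const_nth fps_add_nth flip: fps_of_nat)
    also have "\<dots> = fact (Suc j) * of_nat (Stirling (Suc n) (Suc j)) / fact n"
      by (simp only: IH) (simp add: field_simps)
    finally show ?thesis
      using Suc by (simp add: field_simps del: of_nat_Suc)
  qed
qed

lemma fps_compose_exp_minus_one_nth:
  fixes c :: "'a :: field_char_0"
  shows "(a oo fps_const c * (fps_exp 1 - 1)) $ n =
    (\<Sum>k=0..n. a $ k * c ^ k * fact k * of_nat (Stirling n k)) / fact n"
  by (simp add: fps_compose_nth power_mult_distrib fps_const_power fps_exp_minus_one_power_nth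
      sum_divide_distrib mult.assoc)

lemma geom_poly_egf:
  "Abs_fps (\<lambda>n. geom_poly n x / fact n) = Abs_fps (\<lambda>_. 1) oo fps_const x * (fps_exp 1 - 1)"
  by (simp add: fps_eq_iff fps_compose_exp_minus_one_nth geom_poly_def mult_ac)

lemma harm_geom_poly_egf:
  "Abs_fps (\<lambda>n. harm_geom_poly n x / fact n) = Abs_fps harm oo fps_const x * (fps_exp 1 - 1)"
  by (simp add: fps_eq_iff fps_compose_exp_minus_one_nth harm_geom_poly_def mult_ac
      sum.atLeast_Suc_atMost harm_def)

lemma ones_fps_times_one_minus_X: "Abs_fps (\<lambda>_. 1) * (1 - fps_X) = (1 :: 'a :: ring_1 fps)"
  by (auto simp: fps_eq_iff algebra_simps)

lemma fps_deriv_harm_times_one_minus_X: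
  "fps_deriv (Abs_fps harm * (1 - fps_X)) = (Abs_fps (\<lambda>_. 1) :: 'a :: real_normed_field fps)"
proof (rule fps_ext)
  fix n
  define F :: "'a fps" where "F = Abs_fps harm * (1 - fps_X)"
  have "F $ Suc n = harm (Suc n) - harm n"
    by (simp add: F_def algebra_simps)
  then have "fps_deriv F $ n = of_nat (Suc n) * inverse (of_nat (Suc n))"
    by (simp only: fps_deriv_nth harm_Suc) simp
  then show "fps_deriv F $ n = Abs_fps (\<lambda>_. 1) $ n"
    by (simp del: of_nat_Suc)
qed

lemma ones_fps_compose_times_one_minus:
  fixes u :: "'a :: idom fps"
  assumes "u $ 0 = 0"
  shows "(Abs_fps (\<lambda>_. 1) oo u) * (1 - u) = 1"
  using fps_compose_mult_distrib[OF assms, of "Abs_fps (\<lambda>_. 1)" "1 - fps_X"]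
  by (simp add: assms ones_fps_times_one_minus_X fps_compose_sub_distrib)

lemma fps_compose_harm:
  fixes u :: "'a :: real_normed_field fps"
  assumes "u $ 0 = 0"
  defines "W \<equiv> Abs_fps (\<lambda>_. 1) oo u"
  shows "Abs_fps harm oo u = fps_integral0 (W * fps_deriv u) * W"
proof -
  define H where "H = Abs_fps harm oo u"
  have "H * (1 - u) = (Abs_fps harm * (1 - fps_X)) oo u"
    by (simp add: H_def assms(1) fps_compose_mult_distrib fps_compose_sub_distrib)
  then have "fps_deriv (H * (1 - u)) = (fps_deriv (Abs_fps harm * (1 - fps_X)) oo u) * fps_deriv u"
    by (simp only: fps_compose_deriv[OF assms(1)])
  also have "\<dots> = W * fps_deriv u"
    by (simp only: fps_deriv_harm_times_one_minus_X W_def)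
  finally have "fps_deriv (H * (1 - u)) = W * fps_deriv u" .
  moreover have "(H * (1 - u)) $ 0 = 0"
    by (simp add: H_def assms(1) harm_def)
  ultimately have "H * (1 - u) = fps_integral0 (W * fps_deriv u)"
    by (metis fps_integral0_deriv fps_const_0_eq_0 diff_zero)
  moreover have "H = H * (1 - u) * W"
    using ones_fps_compose_times_one_minus[OF assms(1)] by (simp add: W_def mult.assoc mult.commute)
  ultimately show ?thesis by (simp add: H_def)
qed

lemma fps_integral0_egf_times_egf_nth:
  fixes a b :: "nat \<Rightarrow> 'a :: field_char_0"
  shows "fact m * (fps_integral0 (Abs_fps (\<lambda>n. a n / fact n)) * Abs_fps (\<lambda>n. b n / fact n)) $ m =
    (\<Sum>i=1..m. of_nat (m choose i) * a (i - 1) * b (m - i))"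
proof -
  have "fact m * (fps_integral0 (Abs_fps (\<lambda>n. a n / fact n)) * Abs_fps (\<lambda>n. b n / fact n)) $ m =
      (\<Sum>i=1..m. fact m * (inverse (of_nat i) * (a (i - 1) / fact (i - 1)) * (b (m - i) / fact (m - i))))"
    by (simp add: fps_mult_nth fps_integral_def sum_distrib_left sum.atLeast_Suc_atMost)
  also have "\<dots> = (\<Sum>i=1..m. of_nat (m choose i) * a (i - 1) * b (m - i))"
  proof (rule sum.cong)
    fix i assume i: "i \<in> {1..m}"
    then have "fact i = of_nat i * (fact (i - 1) :: 'a)"
      by (simp add: fact_reduce)
    then show "fact m * (inverse (of_nat i) * (a (i - 1) / fact (i - 1)) * (b (m - i) / fact (m - i))) =
        of_nat (m choose i) * a (i - 1) * b (m - i)"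
      using i by (simp add: binomial_fact field_simps)
  qed simp
  finally show ?thesis .
qed

lemma harm_geom_poly_egf_eq_geom_poly_egf:
  fixes x :: real
  defines "W \<equiv> Abs_fps (\<lambda>n. geom_poly n x / fact n)"
  shows "Abs_fps (\<lambda>n. harm_geom_poly n x / fact n) = (fps_const (1 + x) * fps_integral0 W - fps_X) * W"
proof -
  define u where "u = fps_const x * (fps_exp 1 - 1 :: real fps)"
  have u0: "u $ 0 = 0"
    by (simp add: u_def)
  have W_u: "W = Abs_fps (\<lambda>_. 1) oo u"
    by (simp add: W_def u_def geom_poly_egf)
  have "W * (1 - u) = 1"
    using ones_fps_compose_times_one_minus[OF u0] by (simp add: W_u)
  moreover have "fps_deriv u = fps_const x + u"
    by (simp add: u_def algebra_simps)
  ultimately have "W * fps_deriv u = fps_const (1 + x) * W - 1"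
    by (simp add: algebra_simps flip: fps_const_add)
  then have integral: "fps_integral0 (W * fps_deriv u) = fps_const (1 + x) * fps_integral0 W - fps_X"
    by (simp add: fps_integral0_sub fps_integral0_fps_const_mult_left fps_integral0_one)
  have "Abs_fps (\<lambda>n. harm_geom_poly n x / fact n) = Abs_fps harm oo u"
    by (simp add: u_def harm_geom_poly_egf)
  also have "\<dots> = fps_integral0 (W * fps_deriv u) * W"
    unfolding W_u by (rule fps_compose_harm[OF u0])
  finally show ?thesis
    by (simp only: integral)
qed

theorem theorem2:
  fixes m :: nat and x :: real
  assumes "m \<ge> 1"
  shows "harm_geom_poly m x =
    (1 + x - real m) * geom_poly (m - 1) x
    + (1 + x) * (\<Sum>k=1..m-1. real (m choose k) * geom_poly (k - 1) x * geom_poly (m - k) x)"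
proof -
  define W where "W = Abs_fps (\<lambda>n. geom_poly n x / fact n)"
  have "harm_geom_poly m x = fact m * Abs_fps (\<lambda>n. harm_geom_poly n x / fact n) $ m"
    by simp
  also have "\<dots> = (1 + x) * (fact m * (fps_integral0 W * W) $ m) - fact m * (fps_X * W) $ m"
    by (simp add: harm_geom_poly_egf_eq_geom_poly_egf W_def algebra_simps)
  also have "fact m * (fps_integral0 W * W) $ m =
      (\<Sum>k=1..m. real (m choose k) * geom_poly (k - 1) x * geom_poly (m - k) x)"
    unfolding W_def by (rule fps_integral0_egf_times_egf_nth)
  also have "\<dots> = (\<Sum>k=1..m-1. real (m choose k) * geom_poly (k - 1) x * geom_poly (m - k) x)
      + geom_poly (m - 1) x"
    using assms by (cases m) (simp_all add: geom_poly_def)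
  also have "fact m * (fps_X * W) $ m = real m * geom_poly (m - 1) x"
    using assms by (cases m) (simp_all add: W_def fps_X_mult_nth)
  finally show ?thesis
    by (simp add: algebra_simps)
qed

end
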